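(* Let $\mathcal{P}=(P_1,\ldots,P_r)$ be an $r$-tuple of pairwise disjoint finite subsets of $\mathbb{R}^d$. Then: (i) $0\in\operatorname{aff}(\Phi(\mathcal{P}))$ if and only if $\bigcap_{i=1}^r\operatorname{aff}(P_i)\neq\emptyset$ ($\mathcal{P}$ has an affine Tverberg point); (ii) the set $\Phi(\mathcal{P})$ is affinely dependent if and only if at least one of the sets $P_i$ is affinely dependent or $\bigcap_{i=1}^r\operatorname{linaff}(P_i)\neq\{0\}$ ($\mathcal{P}$ has a Tverberg direction).
   Context: Let $N=(d+1)(r-1)$, $w_1,\ldots,w_r\in\mathbb{R}^{r-1}$ the vertices of a regular $(r-1)$-simplex centered at the origin, $x^+=(x,1)\in\mathbb{R}^{d+1}$ for $x\in\mathbb{R}^d$, and $u\otimes v=(u_1v_1,\ldots,u_1v_n,u_2v_1,\ldots,u_mv_n)$ the tensor product. The $i$th clone of $x$ is $\varphi_i(x)=x^+\otimes w_i\in\mathbb{R}^N$, and $\Phi(\mathcal{P})=\bigcup_{i=1}^r\{\varphi_i(p):p\in P_i\}$. $\operatorname{aff}(X)$ is the affine hull of $X$; $\operatorname{linaff}(X)$ is its translate through the origin, i.e., the set of all linear combinations $\sum\beta_ix_i$ with $x_i\in X$ and $\sum\beta_i=0$. *)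

theory Defs
  imports "HOL-Analysis.Analysis"
begin

text \<open>x^+ = (x,1) in R^{d+1}; the extra coordinate is indexed by None.\<close>
definition xplus :: "real^'d \<Rightarrow> real^('d option)" where
  "xplus x = (\<chi> j. case j of None \<Rightarrow> 1 | Some i \<Rightarrow> x $ i)"

definition tensor :: "real^'a \<Rightarrow> real^'b \<Rightarrow> real^('a \<times> 'b)" where
  "tensor u v = (\<chi> p. u $ fst p * v $ snd p)"

definition clone :: "(nat \<Rightarrow> real^'k) \<Rightarrow> nat \<Rightarrow> real^'d \<Rightarrow> real^(('d option) \<times> 'k)" where
  "clone w i x = tensor (xplus x) (w i)"

definition Phi :: "(nat \<Rightarrow> real^'k) \<Rightarrow> nat \<Rightarrow> (nat \<Rightarrow> (real^'d) set) \<Rightarrow> (real^(('d option) \<times> 'k)) set" where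
  "Phi w r P = (\<Union>i<r. clone w i ` P i)"

definition linaff :: "'a::real_vector set \<Rightarrow> 'a set" where
  "linaff X = {y. \<exists>S \<beta>. finite S \<and> S \<subseteq> X \<and> sum \<beta> S = 0 \<and> y = (\<Sum>x\<in>S. \<beta> x *\<^sub>R x)}"

definition regular_simplex_centered :: "nat \<Rightarrow> (nat \<Rightarrow> 'a::euclidean_space) \<Rightarrow> bool" where
  "regular_simplex_centered r w \<longleftrightarrow>
     inj_on w {..<r} \<and> \<not> affine_dependent (w ` {..<r}) \<and>
     (\<exists>c>0. \<forall>i<r. \<forall>j<r. i \<noteq> j \<longrightarrow> dist (w i) (w j) = c) \<and>
     (\<Sum>i<r. w i) = 0"

end

theory Submission
  imports Defs
begin

(* Write c for coefficients on the index set I = {(i,p). i < r, p \<in> P_i}.  By bilinearity of the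
   tensor product,  \<Sum> c(i,p) \<phi>_i(p) = \<Sum>_i v_i \<otimes> w_i  with block vectors
   v_i = (\<Sum>_p c(i,p) p, \<Sum>_p c(i,p)) \<in> R^(d+1).  Because the w_i are affinely independent and
   sum to 0, the only linear relations among them are the constant ones, so this sum vanishes
   exactly when all block vectors v_i coincide ("balanced" coefficients).  Both parts of the
   lemma then follow by translating affine combinations (sum 1) and affine dependences (sum 0,
   not all zero) of \<Phi>(P) into balanced coefficients and reading off the common block vector:
   a common point of the affine hulls for (i), and either a dependence inside one P_i or a
   common nonzero vector of the linaff(P_i) for (ii). *)

lemma coefficients_through_injection:
  assumes "inj_on g I"
  obtains u where "\<And>x. x \<in> I \<Longrightarrow> u (g x) = c x"
proof (rule that[of "c \<circ> inv_into I g"])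
  fix x assume "x \<in> I"
  then show "(c \<circ> inv_into I g) (g x) = c x" using assms by simp
qed

lemma affine_hull_injective_image:
  fixes g :: "'i \<Rightarrow> 'a::real_vector"
  assumes "finite I" "inj_on g I"
  shows "y \<in> affine hull (g ` I) \<longleftrightarrow> (\<exists>c. sum c I = 1 \<and> (\<Sum>x\<in>I. c x *\<^sub>R g x) = y)"
proof -
  have reindex: "sum u (g ` I) = sum (u \<circ> g) I" "(\<Sum>v\<in>g ` I. u v *\<^sub>R v) = (\<Sum>x\<in>I. u (g x) *\<^sub>R g x)" for u
    using assms by (simp_all add: sum.reindex)
  show ?thesis
  proof
    assume "y \<in> affine hull (g ` I)"
    then obtain u where "sum u (g ` I) = 1" "(\<Sum>v\<in>g ` I. u v *\<^sub>R v) = y"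
      using affine_hull_finite[of "g ` I"] assms(1) by auto
    then show "\<exists>c. sum c I = 1 \<and> (\<Sum>x\<in>I. c x *\<^sub>R g x) = y"
      by (intro exI[of _ "u \<circ> g"]) (simp add: reindex)
  next
    assume "\<exists>c. sum c I = 1 \<and> (\<Sum>x\<in>I. c x *\<^sub>R g x) = y"
    then obtain c where c: "sum c I = 1" "(\<Sum>x\<in>I. c x *\<^sub>R g x) = y" by blast
    obtain u where u: "\<And>x. x \<in> I \<Longrightarrow> u (g x) = c x"
      using coefficients_through_injection[OF assms(2)] by blast
    have "sum u (g ` I) = 1" "(\<Sum>v\<in>g ` I. u v *\<^sub>R v) = y"
      using c u by (simp_all add: reindex)
    then show "y \<in> affine hull (g ` I)"
      using affine_hull_finite[of "g ` I"] assms(1) by auto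
  qed
qed

lemma affine_dependent_injective_image:
  fixes g :: "'i \<Rightarrow> 'a::real_vector"
  assumes "finite I" "inj_on g I"
  shows "affine_dependent (g ` I) \<longleftrightarrow>
    (\<exists>c. sum c I = 0 \<and> (\<exists>x\<in>I. c x \<noteq> 0) \<and> (\<Sum>x\<in>I. c x *\<^sub>R g x) = 0)"
proof -
  have reindex: "sum u (g ` I) = sum (u \<circ> g) I" "(\<Sum>v\<in>g ` I. u v *\<^sub>R v) = (\<Sum>x\<in>I. u (g x) *\<^sub>R g x)" for u
    using assms by (simp_all add: sum.reindex)
  show ?thesis
  proof
    assume "affine_dependent (g ` I)"
    then obtain u where "sum u (g ` I) = 0" "\<exists>v\<in>g ` I. u v \<noteq> 0" "(\<Sum>v\<in>g ` I. u v *\<^sub>R v) = 0"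
      using affine_dependent_explicit_finite[of "g ` I"] assms(1) by auto
    then show "\<exists>c. sum c I = 0 \<and> (\<exists>x\<in>I. c x \<noteq> 0) \<and> (\<Sum>x\<in>I. c x *\<^sub>R g x) = 0"
      by (intro exI[of _ "u \<circ> g"]) (auto simp: reindex)
  next
    assume "\<exists>c. sum c I = 0 \<and> (\<exists>x\<in>I. c x \<noteq> 0) \<and> (\<Sum>x\<in>I. c x *\<^sub>R g x) = 0"
    then obtain c where c: "sum c I = 0" "\<exists>x\<in>I. c x \<noteq> 0" "(\<Sum>x\<in>I. c x *\<^sub>R g x) = 0" by blast
    obtain u where u: "\<And>x. x \<in> I \<Longrightarrow> u (g x) = c x"
      using coefficients_through_injection[OF assms(2)] by blast
    have "sum u (g ` I) = 0" "\<exists>v\<in>g ` I. u v \<noteq> 0" "(\<Sum>v\<in>g ` I. u v *\<^sub>R v) = 0"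
      using c u by (auto simp: reindex)
    then show "affine_dependent (g ` I)"
      using affine_dependent_explicit_finite[of "g ` I"] assms(1) by auto
  qed
qed

lemma linaff_finite:
  assumes "finite S"
  shows "linaff S = {y. \<exists>\<beta>. sum \<beta> S = 0 \<and> (\<Sum>x\<in>S. \<beta> x *\<^sub>R x) = y}"
proof (intro equalityI subsetI)
  fix y assume "y \<in> linaff S"
  then obtain T \<beta> where T: "T \<subseteq> S" "sum \<beta> T = 0" "y = (\<Sum>x\<in>T. \<beta> x *\<^sub>R x)"
    unfolding linaff_def by blast
  define \<beta>' where "\<beta>' x = (if x \<in> T then \<beta> x else 0)" for x
  have "sum \<beta>' S = sum \<beta> (S \<inter> T)"
    unfolding \<beta>'_def by (rule sum.inter_restrict[OF assms, symmetric])
  also have "S \<inter> T = T" using T(1) by blast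
  finally have "sum \<beta>' S = 0" using T(2) by simp
  have "(\<Sum>x\<in>S. \<beta>' x *\<^sub>R x) = (\<Sum>x\<in>S. if x \<in> T then \<beta> x *\<^sub>R x else 0)"
    by (rule sum.cong) (simp_all add: \<beta>'_def)
  also have "\<dots> = (\<Sum>x\<in>S \<inter> T. \<beta> x *\<^sub>R x)"
    by (rule sum.inter_restrict[OF assms, symmetric])
  also have "S \<inter> T = T" using T(1) by blast
  finally have "(\<Sum>x\<in>S. \<beta>' x *\<^sub>R x) = y" using T(3) by simp
  with \<open>sum \<beta>' S = 0\<close> show "y \<in> {y. \<exists>\<beta>. sum \<beta> S = 0 \<and> (\<Sum>x\<in>S. \<beta> x *\<^sub>R x) = y}" by blast
next
  fix y assume "y \<in> {y. \<exists>\<beta>. sum \<beta> S = 0 \<and> (\<Sum>x\<in>S. \<beta> x *\<^sub>R x) = y}"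
  then show "y \<in> linaff S" unfolding linaff_def using assms by blast
qed

(* The properties of the regular simplex that the argument actually uses. *)
definition centered_simplex :: "nat \<Rightarrow> (nat \<Rightarrow> 'a::real_vector) \<Rightarrow> bool" where
  "centered_simplex r w \<longleftrightarrow>
     inj_on w {..<r} \<and> \<not> affine_dependent (w ` {..<r}) \<and> (\<Sum>i<r. w i) = 0"

lemma regular_simplex_imp_centered_simplex:
  "regular_simplex_centered r w \<Longrightarrow> centered_simplex r w"
  by (simp add: regular_simplex_centered_def centered_simplex_def)

lemma centered_simplex_relation_iff:
  fixes w :: "nat \<Rightarrow> 'a::real_vector" and l :: "nat \<Rightarrow> real"
  assumes "centered_simplex r w"
  shows "(\<Sum>i<r. l i *\<^sub>R w i) = 0 \<longleftrightarrow> (\<exists>a. \<forall>i<r. l i = a)"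
proof
  assume rel: "(\<Sum>i<r. l i *\<^sub>R w i) = 0"
  have inj: "inj_on w {..<r}" and indep: "\<not> affine_dependent (w ` {..<r})"
    and centered: "(\<Sum>i<r. w i) = 0"
    using assms by (auto simp: centered_simplex_def)
  define m where "m = (\<Sum>j<r. l j) / r"
  have weights: "sum (\<lambda>j. l j - m) {..<r} = 0"
    by (cases "r = 0") (simp_all add: sum_subtractf m_def)
  have combination: "(\<Sum>j<r. (l j - m) *\<^sub>R w j) = 0"
    using rel centered by (simp add: scaleR_diff_left sum_subtractf flip: scaleR_right.sum)
  have "l j = m" if "j < r" for j
  proof (rule ccontr)
    assume "l j \<noteq> m"
    then have "affine_dependent (w ` {..<r})"
      unfolding affine_dependent_injective_image[OF finite_lessThan inj]
      using weights combination that by (intro exI[of _ "\<lambda>j. l j - m"]) auto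
    with indep show False ..
  qed
  then show "\<exists>a. \<forall>i<r. l i = a" by blast
next
  assume "\<exists>a. \<forall>i<r. l i = a"
  then obtain a where equal: "\<And>i. i < r \<Longrightarrow> l i = a" by blast
  have "(\<Sum>i<r. l i *\<^sub>R w i) = (\<Sum>i<r. a *\<^sub>R w i)"
    by (rule sum.cong) (simp_all add: equal)
  also have "\<dots> = a *\<^sub>R (\<Sum>i<r. w i)"
    by (simp add: scaleR_right.sum)
  finally show "(\<Sum>i<r. l i *\<^sub>R w i) = 0"
    using assms by (simp add: centered_simplex_def)
qed

(* With at least two vertices no vertex is the origin; this makes clones injective. *)
lemma centered_simplex_vertex_nonzero:
  assumes "centered_simplex r w" "2 \<le> r" "i < r"
  shows "w i \<noteq> 0"
proof
  assume "w i = 0"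
  define l where "l j = (if j = i then 1 else 0 :: real)" for j :: nat
  have "(\<Sum>j<r. l j *\<^sub>R w j) = 0"
    using \<open>w i = 0\<close> by (intro sum.neutral) (simp add: l_def)
  then obtain a where equal: "\<And>j. j < r \<Longrightarrow> l j = a"
    using centered_simplex_relation_iff[OF assms(1)] by blast
  define j where "j = (if i = 0 then 1 else 0 :: nat)"
  have "j < r" "j \<noteq> i"
    using assms(2) by (auto simp: j_def)
  then have "l i = l j"
    using equal assms(3) by simp
  with \<open>j \<noteq> i\<close> show False by (simp add: l_def)
qed

definition lift_vec :: "real^'d \<Rightarrow> real \<Rightarrow> real^('d option)" where
  "lift_vec y t = (\<chi> j. case j of None \<Rightarrow> t | Some a \<Rightarrow> y $ a)"

lemma lift_vec_eq_iff: "lift_vec y t = lift_vec y' t' \<longleftrightarrow> y = y' \<and> t = t'"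
  by (auto simp: lift_vec_def vec_eq_iff split: option.splits)

lemma lift_vec_surj: "\<exists>y t. v = lift_vec y t"
  by (intro exI[of _ "\<chi> a. v $ Some a"] exI[of _ "v $ None"])
    (simp add: lift_vec_def vec_eq_iff split: option.split)

lemma combination_xplus:
  "(\<Sum>p\<in>S. c p *\<^sub>R xplus p) = lift_vec (\<Sum>p\<in>S. c p *\<^sub>R p) (sum c S)"
  by (simp add: vec_eq_iff lift_vec_def xplus_def split: option.split)

lemma combination_tensor_left:
  "(\<Sum>x\<in>S. c x *\<^sub>R tensor (u x) v) = tensor (\<Sum>x\<in>S. c x *\<^sub>R u x) v"
  by (simp add: vec_eq_iff tensor_def sum_distrib_right mult.assoc)

lemma centered_simplex_tensor_sum_zero_iff:
  assumes "centered_simplex r w"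
  shows "(\<Sum>i<r. tensor (u i) (w i)) = 0 \<longleftrightarrow> (\<exists>v. \<forall>i<r. u i = v)"
proof -
  have "(\<Sum>i<r. tensor (u i) (w i)) = 0 \<longleftrightarrow> (\<forall>j. (\<Sum>i<r. (u i $ j) *\<^sub>R w i) = 0)"
    by (simp add: vec_eq_iff tensor_def)
  also have "\<dots> \<longleftrightarrow> (\<forall>j. \<exists>a. \<forall>i<r. u i $ j = a)"
    using centered_simplex_relation_iff[OF assms] by simp
  also have "\<dots> \<longleftrightarrow> (\<exists>A. \<forall>j. \<forall>i<r. u i $ j = A j)"
    by (rule choice_iff)
  also have "\<dots> \<longleftrightarrow> (\<exists>v. \<forall>i<r. u i = v)"
  proof
    assume "\<exists>A. \<forall>j. \<forall>i<r. u i $ j = A j"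
    then obtain A where "\<forall>j. \<forall>i<r. u i $ j = A j" by blast
    then have "\<forall>i<r. u i = vec_lambda A" by (simp add: vec_eq_iff)
    then show "\<exists>v. \<forall>i<r. u i = v" ..
  next
    assume "\<exists>v. \<forall>i<r. u i = v"
    then obtain v where "\<forall>i<r. u i = v" by blast
    then show "\<exists>A. \<forall>j. \<forall>i<r. u i $ j = A j"
      by (intro exI[of _ "vec_nth v"]) simp
  qed
  finally show ?thesis .
qed

lemma clone_eq_iff:
  assumes "centered_simplex r w" "2 \<le> r" "i < r" "j < r"
  shows "clone w i p = clone w j q \<longleftrightarrow> i = j \<and> p = q"
proof
  assume eq: "clone w i p = clone w j q"
  have comp: "xplus p $ a * w i $ k = xplus q $ a * w j $ k" for a k
    using eq by (simp add: clone_def tensor_def vec_eq_iff)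
  have "w i = w j"
    using comp[of None] by (simp add: xplus_def vec_eq_iff)
  moreover have "inj_on w {..<r}"
    using assms(1) by (simp add: centered_simplex_def)
  ultimately have "i = j"
    using assms(3,4) by (simp add: inj_on_eq_iff)
  obtain k where "w i $ k \<noteq> 0"
    using centered_simplex_vertex_nonzero[OF assms(1-3)] by (auto simp: vec_eq_iff)
  then have "p $ a = q $ a" for a
    using comp[of "Some a" k] \<open>i = j\<close> by (simp add: xplus_def)
  then have "p = q" by (simp add: vec_eq_iff)
  with \<open>i = j\<close> show "i = j \<and> p = q" ..
qed simp

lemma clone_combination:
  assumes "\<forall>i<r. finite (P i)"
  shows "(\<Sum>(i,p)\<in>Sigma {..<r} P. c (i,p) *\<^sub>R clone w i p)
       = (\<Sum>i<r. tensor (lift_vec (\<Sum>p\<in>P i. c (i,p) *\<^sub>R p) (\<Sum>p\<in>P i. c (i,p))) (w i))"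
proof -
  have "(\<Sum>(i,p)\<in>Sigma {..<r} P. c (i,p) *\<^sub>R clone w i p) = (\<Sum>i<r. \<Sum>p\<in>P i. c (i,p) *\<^sub>R clone w i p)"
    using assms by (simp add: sum.Sigma)
  then show ?thesis
    by (simp add: clone_def combination_tensor_left combination_xplus)
qed

lemma clone_combination_zero_iff:
  assumes "centered_simplex r w" "\<forall>i<r. finite (P i)"
  shows "(\<Sum>(i,p)\<in>Sigma {..<r} P. c (i,p) *\<^sub>R clone w i p) = 0 \<longleftrightarrow>
    (\<exists>y s. \<forall>i<r. (\<Sum>p\<in>P i. c (i,p) *\<^sub>R p) = y \<and> (\<Sum>p\<in>P i. c (i,p)) = s)"
proof -
  let ?v = "\<lambda>i. lift_vec (\<Sum>p\<in>P i. c (i,p) *\<^sub>R p) (\<Sum>p\<in>P i. c (i,p))"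
  have "(\<Sum>(i,p)\<in>Sigma {..<r} P. c (i,p) *\<^sub>R clone w i p) = 0 \<longleftrightarrow> (\<exists>v. \<forall>i<r. ?v i = v)"
    by (simp only: clone_combination[OF assms(2)] centered_simplex_tensor_sum_zero_iff[OF assms(1)])
  also have "\<dots> \<longleftrightarrow> (\<exists>y s. \<forall>i<r. ?v i = lift_vec y s)"
  proof
    assume "\<exists>v. \<forall>i<r. ?v i = v"
    then obtain v where v: "\<forall>i<r. ?v i = v" ..
    obtain y s where "v = lift_vec y s"
      using lift_vec_surj by blast
    with v show "\<exists>y s. \<forall>i<r. ?v i = lift_vec y s" by (intro exI[of _ y] exI[of _ s]) simp
  next
    assume "\<exists>y s. \<forall>i<r. ?v i = lift_vec y s"
    then obtain y s where "\<forall>i<r. ?v i = lift_vec y s" by blast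
    then show "\<exists>v. \<forall>i<r. ?v i = v" ..
  qed
  also have "\<dots> \<longleftrightarrow> (\<exists>y s. \<forall>i<r. (\<Sum>p\<in>P i. c (i,p) *\<^sub>R p) = y \<and> (\<Sum>p\<in>P i. c (i,p)) = s)"
    by (simp only: lift_vec_eq_iff)
  finally show ?thesis .
qed

lemma sum_Sigma_blocks:
  fixes r :: nat
  assumes "\<forall>i<r. finite (P i)"
  shows "sum c (Sigma {..<r} P) = (\<Sum>i<r. \<Sum>p\<in>P i. c (i,p))"
proof -
  have "(\<Sum>i<r. \<Sum>p\<in>P i. c (i,p)) = (\<Sum>(i,p)\<in>Sigma {..<r} P. c (i,p))"
    by (rule sum.Sigma) (use assms in auto)
  then show ?thesis by simp
qed

lemma Phi_eq_image: "Phi w r P = (\<lambda>(i,p). clone w i p) ` Sigma {..<r} P"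
  by (auto simp: Phi_def)

lemma clone_inj_on:
  assumes "centered_simplex r w" "2 \<le> r"
  shows "inj_on (\<lambda>(i,p). clone w i p) (Sigma {..<r} P)"
  by (intro inj_onI) (auto simp: clone_eq_iff[OF assms])

lemma affine_hull_Phi_iff:
  assumes "centered_simplex r w" "2 \<le> r" "\<forall>i<r. finite (P i)"
  shows "y \<in> affine hull Phi w r P \<longleftrightarrow>
    (\<exists>c. sum c (Sigma {..<r} P) = 1 \<and> (\<Sum>(i,p)\<in>Sigma {..<r} P. c (i,p) *\<^sub>R clone w i p) = y)"
  unfolding Phi_eq_image using assms
  by (subst affine_hull_injective_image) (auto simp: clone_inj_on case_prod_beta)

lemma affine_dependent_Phi_iff:
  assumes "centered_simplex r w" "2 \<le> r" "\<forall>i<r. finite (P i)"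
  shows "affine_dependent (Phi w r P) \<longleftrightarrow>
    (\<exists>c. sum c (Sigma {..<r} P) = 0 \<and> (\<exists>x\<in>Sigma {..<r} P. c x \<noteq> 0)
       \<and> (\<Sum>(i,p)\<in>Sigma {..<r} P. c (i,p) *\<^sub>R clone w i p) = 0)"
  unfolding Phi_eq_image using assms
  by (subst affine_dependent_injective_image) (auto simp: clone_inj_on case_prod_beta)

lemma tverberg_point_iff:
  fixes w :: "nat \<Rightarrow> real^'k" and P :: "nat \<Rightarrow> (real^'d) set"
  assumes simplex: "centered_simplex r w" and "2 \<le> r" and fin: "\<forall>i<r. finite (P i)"
  shows "0 \<in> affine hull Phi w r P \<longleftrightarrow> (\<Inter>i<r. affine hull P i) \<noteq> {}"
proof
  assume "0 \<in> affine hull Phi w r P"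
  then obtain c where sum1: "sum c (Sigma {..<r} P) = 1"
    and "(\<Sum>(i,p)\<in>Sigma {..<r} P. c (i,p) *\<^sub>R clone w i p) = 0"
    using affine_hull_Phi_iff[OF assms] by blast
  then obtain y s where point: "\<And>i. i < r \<Longrightarrow> (\<Sum>p\<in>P i. c (i,p) *\<^sub>R p) = y"
    and weight: "\<And>i. i < r \<Longrightarrow> (\<Sum>p\<in>P i. c (i,p)) = s"
    using clone_combination_zero_iff[OF simplex fin] by blast
  have "1 = (\<Sum>i<r. \<Sum>p\<in>P i. c (i,p))"
    using sum1 by (simp add: sum_Sigma_blocks[OF fin])
  also have "\<dots> = real r * s"
    by (simp add: weight)
  finally have rs: "real r * s = 1" ..
  have "real r *\<^sub>R y \<in> affine hull P i" if "i < r" for i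
    unfolding affine_hull_finite[OF fin[rule_format, OF that]]
  proof (intro CollectI exI[of _ "\<lambda>p. real r * c (i,p)"] conjI)
    show "(\<Sum>p\<in>P i. real r * c (i,p)) = 1"
      using rs weight[OF that] by (simp flip: sum_distrib_left)
    show "(\<Sum>p\<in>P i. (real r * c (i,p)) *\<^sub>R p) = real r *\<^sub>R y"
      unfolding point[OF that, symmetric] by (simp add: scaleR_right.sum)
  qed
  then show "(\<Inter>i<r. affine hull P i) \<noteq> {}" by blast
next
  have r: "0 < r" using \<open>2 \<le> r\<close> by simp
  assume "(\<Inter>i<r. affine hull P i) \<noteq> {}"
  then obtain x where x: "\<And>i. i < r \<Longrightarrow> x \<in> affine hull P i" by blast
  have "\<exists>u. sum u (P i) = 1 \<and> (\<Sum>p\<in>P i. u p *\<^sub>R p) = x" if "i < r" for i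
    using x[OF that] by (simp add: affine_hull_finite[OF fin[rule_format, OF that]])
  then obtain U where U: "\<And>i. i < r \<Longrightarrow> sum (U i) (P i) = 1 \<and> (\<Sum>p\<in>P i. U i p *\<^sub>R p) = x"
    by metis
  define c where "c = (\<lambda>(i,p). U i p / real r)"
  have weight: "(\<Sum>p\<in>P i. c (i,p)) = 1 / real r" if "i < r" for i
    using U[OF that] by (simp add: c_def flip: sum_divide_distrib)
  have point: "(\<Sum>p\<in>P i. c (i,p) *\<^sub>R p) = x /\<^sub>R real r" if "i < r" for i
  proof -
    have "(\<Sum>p\<in>P i. c (i,p) *\<^sub>R p) = (\<Sum>p\<in>P i. U i p *\<^sub>R p) /\<^sub>R real r"
      by (simp add: c_def scaleR_right.sum divide_inverse_commute)
    then show ?thesis using U[OF that] by simp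
  qed
  have "(\<Sum>(i,p)\<in>Sigma {..<r} P. c (i,p) *\<^sub>R clone w i p) = 0"
    unfolding clone_combination_zero_iff[OF simplex fin]
    by (intro exI[of _ "x /\<^sub>R real r"] exI[of _ "1 / real r"]) (simp add: weight point)
  moreover have "sum c (Sigma {..<r} P) = 1"
    using r by (simp add: sum_Sigma_blocks[OF fin] weight)
  ultimately show "0 \<in> affine hull Phi w r P"
    using affine_hull_Phi_iff[OF assms] by blast
qed

lemma affine_dependent_Phi_cases:
  fixes w :: "nat \<Rightarrow> real^'k" and P :: "nat \<Rightarrow> (real^'d) set"
  assumes simplex: "centered_simplex r w" and "2 \<le> r" and fin: "\<forall>i<r. finite (P i)"
    and "affine_dependent (Phi w r P)"
  shows "(\<exists>i<r. affine_dependent (P i)) \<or> (\<Inter>i<r. linaff (P i)) \<noteq> {0}"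
proof -
  have r: "0 < r" using \<open>2 \<le> r\<close> by simp
  obtain c where sum0: "sum c (Sigma {..<r} P) = 0" and nonzero: "\<exists>x\<in>Sigma {..<r} P. c x \<noteq> 0"
    and "(\<Sum>(i,p)\<in>Sigma {..<r} P. c (i,p) *\<^sub>R clone w i p) = 0"
    using affine_dependent_Phi_iff[OF simplex \<open>2 \<le> r\<close> fin] assms(4) by blast
  then obtain u s where point: "\<And>i. i < r \<Longrightarrow> (\<Sum>p\<in>P i. c (i,p) *\<^sub>R p) = u"
    and weight: "\<And>i. i < r \<Longrightarrow> (\<Sum>p\<in>P i. c (i,p)) = s"
    using clone_combination_zero_iff[OF simplex fin] by blast
  have "0 = (\<Sum>i<r. \<Sum>p\<in>P i. c (i,p))"
    using sum0 by (simp add: sum_Sigma_blocks[OF fin])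
  also have "\<dots> = real r * s"
    by (simp add: weight)
  finally have "s = 0" using r by simp
  show ?thesis
  proof (cases "u = 0")
    case True
    obtain i p where "i < r" "p \<in> P i" "c (i,p) \<noteq> 0"
      using nonzero by auto
    then have "affine_dependent (P i)"
      unfolding affine_dependent_explicit_finite[OF fin[rule_format, OF \<open>i < r\<close>]]
      by (intro exI[of _ "\<lambda>p. c (i,p)"] conjI bexI[of _ p])
        (simp_all add: weight point \<open>s = 0\<close> True)
    then show ?thesis using \<open>i < r\<close> by blast
  next
    case False
    have "u \<in> linaff (P i)" if "i < r" for i
      unfolding linaff_finite[OF fin[rule_format, OF that]]
      by (intro CollectI exI[of _ "\<lambda>p. c (i,p)"] conjI) (simp_all add: that weight point \<open>s = 0\<close>)
    then show ?thesis using False by blast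
  qed
qed

lemma affine_dependent_Phi_from_block:
  fixes w :: "nat \<Rightarrow> real^'k" and P :: "nat \<Rightarrow> (real^'d) set"
  assumes simplex: "centered_simplex r w" and "2 \<le> r" and fin: "\<forall>i<r. finite (P i)"
    and "i0 < r" and "affine_dependent (P i0)"
  shows "affine_dependent (Phi w r P)"
proof -
  obtain U v where v: "v \<in> P i0" "U v \<noteq> 0"
    and U: "sum U (P i0) = 0" "(\<Sum>p\<in>P i0. U p *\<^sub>R p) = 0"
    using assms(5) unfolding affine_dependent_explicit_finite[OF fin[rule_format, OF assms(4)]]
    by blast
  define c where "c = (\<lambda>(i,p). if i = i0 then U p else 0)"
  have weight: "(\<Sum>p\<in>P i. c (i,p)) = 0" for i
    using U by (cases "i = i0") (simp_all add: c_def)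
  have point: "(\<Sum>p\<in>P i. c (i,p) *\<^sub>R p) = 0" for i
    using U by (cases "i = i0") (simp_all add: c_def)
  have "(\<Sum>(i,p)\<in>Sigma {..<r} P. c (i,p) *\<^sub>R clone w i p) = 0"
    unfolding clone_combination_zero_iff[OF simplex fin]
    by (intro exI[of _ 0] exI[of _ 0]) (simp add: weight point)
  moreover have "sum c (Sigma {..<r} P) = 0"
    by (simp add: sum_Sigma_blocks[OF fin] weight)
  moreover have "c (i0, v) \<noteq> 0" "(i0, v) \<in> Sigma {..<r} P"
    using assms(4) v by (simp_all add: c_def)
  ultimately show ?thesis
    using affine_dependent_Phi_iff[OF simplex \<open>2 \<le> r\<close> fin] by blast
qed

(* A Tverberg direction u gives a dependence of the clones: each block realises u with
   coefficients summing to 0, and these blocks are balanced. *)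
lemma affine_dependent_Phi_from_direction:
  fixes w :: "nat \<Rightarrow> real^'k" and P :: "nat \<Rightarrow> (real^'d) set"
  assumes simplex: "centered_simplex r w" and "2 \<le> r" and fin: "\<forall>i<r. finite (P i)"
    and "u \<noteq> 0" and direction: "\<And>i. i < r \<Longrightarrow> u \<in> linaff (P i)"
  shows "affine_dependent (Phi w r P)"
proof -
  have r: "0 < r" using \<open>2 \<le> r\<close> by simp
  have "\<exists>\<beta>. sum \<beta> (P i) = 0 \<and> (\<Sum>p\<in>P i. \<beta> p *\<^sub>R p) = u" if "i < r" for i
    using direction[OF that] by (simp add: linaff_finite[OF fin[rule_format, OF that]])
  then obtain B where B: "\<And>i. i < r \<Longrightarrow> sum (B i) (P i) = 0 \<and> (\<Sum>p\<in>P i. B i p *\<^sub>R p) = u"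
    by metis
  define c where "c = (\<lambda>(i,p). B i p)"
  have weight: "(\<Sum>p\<in>P i. c (i,p)) = 0" and point: "(\<Sum>p\<in>P i. c (i,p) *\<^sub>R p) = u"
    if "i < r" for i
    using B[OF that] by (simp_all add: c_def)
  have "(\<Sum>(i,p)\<in>Sigma {..<r} P. c (i,p) *\<^sub>R clone w i p) = 0"
    unfolding clone_combination_zero_iff[OF simplex fin]
    by (intro exI[of _ u] exI[of _ 0]) (simp add: weight point)
  moreover have "sum c (Sigma {..<r} P) = 0"
    by (simp add: sum_Sigma_blocks[OF fin] weight)
  moreover have "\<exists>x\<in>Sigma {..<r} P. c x \<noteq> 0"
  proof (rule ccontr)
    assume "\<not> (\<exists>x\<in>Sigma {..<r} P. c x \<noteq> 0)"
    then have "(\<Sum>p\<in>P 0. c (0,p) *\<^sub>R p) = 0" using r by simp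
    then show False using point[OF r] \<open>u \<noteq> 0\<close> by simp
  qed
  ultimately show ?thesis
    using affine_dependent_Phi_iff[OF simplex \<open>2 \<le> r\<close> fin] by blast
qed

lemma tverberg_direction_iff:
  fixes w :: "nat \<Rightarrow> real^'k" and P :: "nat \<Rightarrow> (real^'d) set"
  assumes simplex: "centered_simplex r w" and "2 \<le> r" and fin: "\<forall>i<r. finite (P i)"
  shows "affine_dependent (Phi w r P) \<longleftrightarrow>
           (\<exists>i<r. affine_dependent (P i)) \<or> (\<Inter>i<r. linaff (P i)) \<noteq> {0}"
proof
  assume "affine_dependent (Phi w r P)"
  then show "(\<exists>i<r. affine_dependent (P i)) \<or> (\<Inter>i<r. linaff (P i)) \<noteq> {0}"
    by (rule affine_dependent_Phi_cases[OF assms])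
next
  assume "(\<exists>i<r. affine_dependent (P i)) \<or> (\<Inter>i<r. linaff (P i)) \<noteq> {0}"
  then show "affine_dependent (Phi w r P)"
  proof
    assume "\<exists>i<r. affine_dependent (P i)"
    then show ?thesis using affine_dependent_Phi_from_block[OF assms] by blast
  next
    assume "(\<Inter>i<r. linaff (P i)) \<noteq> {0}"
    moreover have "0 \<in> (\<Inter>i<r. linaff (P i))"
      unfolding linaff_def by (auto intro!: exI[of _ "{}"])
    ultimately obtain u where "u \<noteq> 0" "\<And>i. i < r \<Longrightarrow> u \<in> linaff (P i)" by blast
    then show ?thesis by (rule affine_dependent_Phi_from_direction[OF assms])
  qed
qed

theorem lemma4:
  fixes r :: nat
    and w :: "nat \<Rightarrow> real^'k"
    and P :: "nat \<Rightarrow> (real^'d) set"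
  assumes "r = CARD('k) + 1"
    and "regular_simplex_centered r w"
    and "\<forall>i<r. finite (P i)"
    and "\<forall>i<r. \<forall>j<r. i \<noteq> j \<longrightarrow> P i \<inter> P j = {}"
  shows "(0 \<in> affine hull (Phi w r P) \<longleftrightarrow> (\<Inter>i<r. affine hull (P i)) \<noteq> {})
       \<and> (affine_dependent (Phi w r P) \<longleftrightarrow>
            (\<exists>i<r. affine_dependent (P i)) \<or> (\<Inter>i<r. linaff (P i)) \<noteq> {0})"
proof -
  have simplex: "centered_simplex r w"
    using assms(2) by (rule regular_simplex_imp_centered_simplex)
  have "2 \<le> r"
    using assms(1) by simp
  show ?thesis
    using tverberg_point_iff[OF simplex \<open>2 \<le> r\<close> assms(3)]
      tverberg_direction_iff[OF simplex \<open>2 \<le> r\<close> assms(3)] by (rule conjI)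
qed

end
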